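(* Let $G,D\subsetneq\mathbb{R}^n$ be domains and $1\le p<\infty$. Let $f:G\to D$ be a surjective mapping and $L\ge1$ such that \[ b_{G,p}(z_1,z_2)/L\le b_{D,p}(f(z_1),f(z_2))\le L\,b_{G,p}(z_1,z_2)\quad\text{for all } z_1,z_2\in G. \] Then $f$ is a quasiconformal homeomorphism (either sense-preserving or sense-reversing), and its linear dilatation satisfies $H_f(z)\le 4^{1-\frac1p}L^2$ for all $z\in G$.
   Context: For a domain $G\subsetneq\mathbb{R}^n$, $p\ge1$ and $z_1,z_2\in G$, $b_{G,p}(z_1,z_2)=\sup_{z\in\partial G}\frac{|z_1-z_2|}{\sqrt[p]{|z_1-z|^p+|z-z_2|^p}}$. For a homeomorphism $f$ and $z\in G$, the linear dilatation is $H_f(z)=\limsup_{r\to0}\frac{L_f(z,r)}{l_f(z,r)}$, where $L_f(z,r)=\sup\{|f(z_1)-f(z)|:|z_1-z|=r\}$ and $l_f(z,r)=\inf\{|f(z_1)-f(z)|:|z_1-z|=r\}$. *)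

theory Defs
  imports "HOL-Analysis.Analysis"
begin

definition is_domain :: "'a::euclidean_space set \<Rightarrow> bool" where
  "is_domain G \<longleftrightarrow> open G \<and> connected G \<and> G \<noteq> {}"

definition b_metric :: "'a::euclidean_space set \<Rightarrow> real \<Rightarrow> 'a \<Rightarrow> 'a \<Rightarrow> real" where
  "b_metric G p z1 z2 =
     (SUP z\<in>frontier G. dist z1 z2 / ((dist z1 z) powr p + (dist z z2) powr p) powr (1 / p))"

definition Lmax :: "('a::euclidean_space \<Rightarrow> 'b::euclidean_space) \<Rightarrow> 'a \<Rightarrow> real \<Rightarrow> real" where
  "Lmax f z r = (SUP z1\<in>sphere z r. dist (f z1) (f z))"

definition lmin :: "('a::euclidean_space \<Rightarrow> 'b::euclidean_space) \<Rightarrow> 'a \<Rightarrow> real \<Rightarrow> real" where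
  "lmin f z r = (INF z1\<in>sphere z r. dist (f z1) (f z))"

definition lin_dil :: "('a::euclidean_space \<Rightarrow> 'b::euclidean_space) \<Rightarrow> 'a \<Rightarrow> ereal" where
  "lin_dil f z = Limsup (at_right 0) (\<lambda>r. ereal (Lmax f z r / lmin f z r))"

text \<open>Quasiconformal homeomorphism (metric definition): a homeomorphism of G onto D
  whose linear dilatation is bounded in G.\<close>
definition qc_homeomorphism :: "('a::euclidean_space \<Rightarrow> 'a) \<Rightarrow> 'a set \<Rightarrow> 'a set \<Rightarrow> bool" where
  "qc_homeomorphism f G D \<longleftrightarrow>
     (\<exists>g. homeomorphism G D f g) \<and> (\<exists>K::real. \<forall>z\<in>G. lin_dil f z \<le> ereal K)"

end

theory Submission
  imports Defs
begin

text \<open>For r = |x - y| and d = d(x, \<partial>A) the point pair function satisfies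
  r / (2^(1/p) (d + r)) \<le> b_{A,p}(x, y) \<le> r / (2^(1/p) (d - r)), the upper bound for r < d.
  Feeding these into the two-sided hypothesis makes |f y - f x| comparable to |y - x| near every
  point with explicit constants: f is injective and locally Lipschitz at each point, and so is
  its inverse, hence f is a homeomorphism; and on the sphere of radius r about x the ratio of the
  largest to the smallest value of |f y - f x| is at most L (L (d + r) + r) / (d - (1 + L) r),
  which tends to L^2 as r \<rightarrow> 0. So in fact H_f \<le> L^2 \<le> 4^(1 - 1/p) L^2.\<close>

lemma powr_mean_mono:
  fixes p a b a' b' :: real
  assumes "p > 0" "0 \<le> a" "a \<le> a'" "0 \<le> b" "b \<le> b'"
  shows "(a powr p + b powr p) powr (1/p) \<le> (a' powr p + b' powr p) powr (1/p)"
  using assms by (intro powr_mono2 add_mono) auto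

lemma powr_mean_diag:
  fixes p c :: real
  assumes "p > 0" "0 \<le> c"
  shows "(c powr p + c powr p) powr (1/p) = 2 powr (1/p) * c"
  using assms by (simp add: powr_mult powr_powr flip: mult_2)

lemma max_le_powr_mean:
  fixes p a b :: real
  assumes "p > 0" "0 \<le> a" "0 \<le> b"
  shows "max a b \<le> (a powr p + b powr p) powr (1/p)"
proof -
  have "max a b = (max a b powr p) powr (1/p)"
    using assms by (simp add: powr_powr)
  also have "\<dots> \<le> (a powr p + b powr p) powr (1/p)"
    using assms by (intro powr_mono2) (auto simp: max_def)
  finally show ?thesis .
qed

lemma b_metric_term_le_2:
  fixes x y z :: "'a::euclidean_space"
  assumes "p > 0"
  shows "dist x y / (dist x z powr p + dist z y powr p) powr (1/p) \<le> 2"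
proof -
  let ?M = "(dist x z powr p + dist z y powr p) powr (1/p)"
  have "dist x y \<le> 2 * ?M"
    using dist_triangle[of x y z] max_le_powr_mean[OF assms, of "dist x z" "dist z y"] by simp
  then show ?thesis by (simp add: divide_le_eq mult.commute)
qed

lemma b_metric_le_frontier_dist:
  fixes x y :: "'a::euclidean_space"
  assumes "p > 0" "frontier A \<noteq> {}" "\<forall>w\<in>frontier A. d \<le> dist x w" "dist x y < d"
  shows "b_metric A p x y \<le> dist x y / (2 powr (1/p) * (d - dist x y))"
  unfolding b_metric_def
proof (rule cSUP_least[OF assms(2)])
  fix w assume w: "w \<in> frontier A"
  have "d \<le> dist x w" using assms(3) w by blast
  then have "d - dist x y \<le> dist w y"
    using dist_triangle[of x w y] by (simp add: dist_commute)
  have "2 powr (1/p) * (d - dist x y)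
      = ((d - dist x y) powr p + (d - dist x y) powr p) powr (1/p)"
    using assms by (intro powr_mean_diag[symmetric]) auto
  also have "\<dots> \<le> (dist x w powr p + dist w y powr p) powr (1/p)"
    using assms(1,4) zero_le_dist[of x y] \<open>d \<le> dist x w\<close> \<open>d - dist x y \<le> dist w y\<close>
    by (intro powr_mean_mono) linarith+
  finally have "2 powr (1/p) * (d - dist x y) \<le> (dist x w powr p + dist w y powr p) powr (1/p)" .
  then show "dist x y / (dist x w powr p + dist w y powr p) powr (1/p)
      \<le> dist x y / (2 powr (1/p) * (d - dist x y))"
    using assms(4) by (intro frac_le) auto
qed

lemma b_metric_ge_frontier_point:
  fixes x y w :: "'a::euclidean_space"
  assumes "p > 0" "w \<in> frontier A"
  shows "dist x y / (2 powr (1/p) * (dist x w + dist x y)) \<le> b_metric A p x y"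
  unfolding b_metric_def
proof (rule cSUP_upper2[OF _ assms(2)])
  let ?M = "(dist x w powr p + dist w y powr p) powr (1/p)"
  show "bdd_above ((\<lambda>z. dist x y / (dist x z powr p + dist z y powr p) powr (1/p)) ` frontier A)"
    using b_metric_term_le_2[OF assms(1)] by (intro bdd_aboveI[where M=2]) auto
  have "?M \<le> 2 powr (1/p) * (dist x w + dist x y)"
    using assms dist_triangle[of w y x] powr_mean_diag[of p "dist x w + dist x y"]
      powr_mean_mono[of p "dist x w" "dist x w + dist x y" "dist w y" "dist x w + dist x y"]
    by (simp add: dist_commute)
  moreover have "dist x y \<le> 2 * ?M"
    using dist_triangle[of x y w] max_le_powr_mean[OF assms(1), of "dist x w" "dist w y"] by simp
  ultimately show "dist x y / (2 powr (1/p) * (dist x w + dist x y)) \<le> dist x y / ?M"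
    by (cases "dist x y = 0") (auto intro!: divide_left_mono mult_pos_pos add_nonneg_pos)
qed

lemma b_metric_distortion:
  fixes x y w :: "'a::euclidean_space" and u v w' :: "'b::euclidean_space"
  assumes "p > 0" "L \<ge> 0" "frontier A \<noteq> {}" "\<forall>w\<in>frontier A. d \<le> dist x w"
    "dist x y < d" "w' \<in> frontier B"
    "b_metric B p u v \<le> L * b_metric A p x y"
  shows "dist u v * (d - dist x y) \<le> L * dist x y * (dist u w' + dist u v)"
proof -
  let ?K = "2 powr (1/p)" and ?r = "dist x y" and ?s = "dist u v"
  have "?s / (?K * (dist u w' + ?s)) \<le> b_metric B p u v"
    using b_metric_ge_frontier_point[OF assms(1,6)] .
  also have "\<dots> \<le> L * b_metric A p x y" by fact
  also have "\<dots> \<le> L * (?r / (?K * (d - ?r)))"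
    using b_metric_le_frontier_dist[OF assms(1,3,4,5)] assms(2) by (intro mult_left_mono)
  finally have "?s / (?K * (dist u w' + ?s)) \<le> L * ?r / (?K * (d - ?r))" by simp
  then show ?thesis
    using assms(5) by (cases "?s = 0") (simp_all add: divide_le_eq le_divide_eq add_nonneg_pos)
qed

lemma dist_image_upper_bound:
  fixes h :: "'a::euclidean_space \<Rightarrow> 'b::euclidean_space"
  assumes "p > 0" "L \<ge> 0" "frontier A \<noteq> {}" "\<forall>w\<in>frontier A. d \<le> dist x w"
    "w' \<in> frontier B" "(1 + L) * dist x y < d"
    "b_metric B p (h x) (h y) \<le> L * b_metric A p x y"
  shows "dist (h x) (h y) \<le> L * dist x y * dist (h x) w' / (d - (1 + L) * dist x y)"
proof -
  have "dist x y \<le> (1 + L) * dist x y"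
    using assms(2) by (simp add: algebra_simps)
  then have "dist x y < d" using assms(6) by linarith
  from b_metric_distortion[OF assms(1-4) this assms(5,7)]
  have "dist (h x) (h y) * (d - (1 + L) * dist x y) \<le> L * dist x y * dist (h x) w'"
    by (simp add: algebra_simps)
  then show ?thesis using assms(6) by (simp add: le_divide_eq)
qed

lemma dist_image_lower_bound:
  fixes h :: "'a::euclidean_space \<Rightarrow> 'b::euclidean_space"
  assumes "p > 0" "L \<ge> 0" "frontier B \<noteq> {}" "\<forall>w\<in>frontier B. d' \<le> dist (h x) w"
    "w \<in> frontier A" "dist (h x) (h y) < d'"
    "b_metric A p x y \<le> L * b_metric B p (h x) (h y)"
  shows "dist x y * d' / (L * (dist x w + dist x y) + dist x y) \<le> dist (h x) (h y)"
proof -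
  from b_metric_distortion[OF assms(1-4,6,5,7)]
  have "dist x y * d' \<le> dist (h x) (h y) * (L * (dist x w + dist x y) + dist x y)"
    by (simp add: algebra_simps)
  moreover have "L * (dist x w + dist x y) + dist x y \<ge> 0"
    using assms(2) by simp
  ultimately show ?thesis
    by (simp add: divide_le_eq)
qed

lemma nearest_frontier_point:
  fixes x :: "'a::euclidean_space"
  assumes "open A" "A \<noteq> UNIV" "x \<in> A"
  obtains d w where "d > 0" "w \<in> frontier A" "dist x w = d"
    "\<forall>w\<in>frontier A. d \<le> dist x w" "ball x d \<subseteq> A"
proof -
  have "frontier A \<noteq> {}" using frontier_not_empty assms by blast
  then obtain w where w: "w \<in> frontier A" "\<And>v. v \<in> frontier A \<Longrightarrow> dist x w \<le> dist x v"
    using distance_attains_inf[OF frontier_closed] by metis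
  have "w \<notin> A" using w(1) assms(1) by (simp add: frontier_def interior_open)
  then have "dist x w > 0" using assms(3) by auto
  moreover have "ball x (dist x w) \<subseteq> A"
  proof (rule ccontr)
    assume "\<not> ball x (dist x w) \<subseteq> A"
    then have "ball x (dist x w) - A \<noteq> {}" by blast
    moreover have "x \<in> ball x (dist x w) \<inter> A" using assms(3) \<open>dist x w > 0\<close> by simp
    ultimately have "ball x (dist x w) \<inter> frontier A \<noteq> {}"
      by (intro connected_Int_frontier) blast+
    then obtain v where "v \<in> frontier A" "dist x v < dist x w" by auto
    then show False using w(2) by fastforce
  qed
  ultimately show ?thesis using that w by blast
qed

lemma continuous_on_if_b_metric_le:
  fixes h :: "'a::euclidean_space \<Rightarrow> 'b::euclidean_space"
  assumes "p > 0" "L \<ge> 0" "open A" "A \<noteq> UNIV" "frontier B \<noteq> {}"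
    "\<forall>x\<in>A. \<forall>y\<in>A. b_metric B p (h x) (h y) \<le> L * b_metric A p x y"
  shows "continuous_on A h"
proof -
  have "isCont h x" if x: "x \<in> A" for x
  proof -
    obtain d w where d: "d > 0" "w \<in> frontier A" "dist x w = d"
      "\<forall>w\<in>frontier A. d \<le> dist x w" "ball x d \<subseteq> A"
      by (rule nearest_frontier_point[OF assms(3,4) x])
    obtain w' where w': "w' \<in> frontier B" using assms(5) by blast
    define bound where "bound y = L * dist x y * dist (h x) w' / (d - (1 + L) * dist x y)" for y
    have "eventually (\<lambda>y. y \<in> ball x (d / (1 + L))) (at x)"
      using eventually_at_ball[of "d / (1 + L)" x UNIV] d(1) assms(2) by simp
    then have "eventually (\<lambda>y. dist (h y) (h x) \<le> bound y) (at x)"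
    proof eventually_elim
      case (elim y)
      then have small: "(1 + L) * dist x y < d" using assms(2) by (simp add: field_simps)
      moreover have "dist x y \<le> (1 + L) * dist x y"
        using assms(2) by (simp add: algebra_simps)
      ultimately have "y \<in> A" using d(5) by auto
      then have "b_metric B p (h x) (h y) \<le> L * b_metric A p x y" using assms(6) x by blast
      moreover have "frontier A \<noteq> {}" using d(2) by blast
      ultimately show ?case
        using dist_image_upper_bound[OF assms(1,2) _ d(4) w' small] unfolding bound_def
        by (simp add: dist_commute)
    qed
    moreover have "(bound \<longlongrightarrow> 0) (at x)"
    proof -
      have "(bound \<longlongrightarrow> L * dist x x * dist (h x) w' / (d - (1 + L) * dist x x)) (at x)"
        unfolding bound_def using d(1) by (intro tendsto_intros) auto
      then show ?thesis by simp
    qed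
    ultimately have "((\<lambda>y. dist (h y) (h x)) \<longlongrightarrow> 0) (at x)"
      using tendsto_sandwich[of "\<lambda>_. 0" "\<lambda>y. dist (h y) (h x)" "at x" bound 0] by simp
    then show "isCont h x" unfolding isCont_def by (rule tendsto_dist_iff[THEN iffD2])
  qed
  then show ?thesis using continuous_at_imp_continuous_on by blast
qed

lemma inj_on_if_b_metric_ge:
  fixes f :: "'a::euclidean_space \<Rightarrow> 'b::euclidean_space"
  assumes "p > 0" "L \<ge> 0" "G \<noteq> UNIV" "open D" "D \<noteq> UNIV" "f ` G \<subseteq> D"
    "\<forall>x\<in>G. \<forall>y\<in>G. b_metric G p x y \<le> L * b_metric D p (f x) (f y)"
  shows "inj_on f G"
proof (rule inj_onI, rule ccontr)
  fix x y assume x: "x \<in> G" and y: "y \<in> G" and "f x = f y" "x \<noteq> y"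
  have "frontier G \<noteq> {}" using frontier_not_empty assms(3) x by blast
  then obtain w where w: "w \<in> frontier G" by blast
  have "f x \<in> D" using assms(6) x by blast
  then obtain d' w' where d': "d' > 0" "w' \<in> frontier D" "dist (f x) w' = d'"
    "\<forall>w\<in>frontier D. d' \<le> dist (f x) w" "ball (f x) d' \<subseteq> D"
    by (rule nearest_frontier_point[OF assms(4,5)])
  have "frontier D \<noteq> {}" using d'(2) by blast
  moreover have "dist (f x) (f y) < d'" using \<open>f x = f y\<close> d'(1) by simp
  moreover have "b_metric G p x y \<le> L * b_metric D p (f x) (f y)" using assms(7) x y by blast
  ultimately have "dist x y * d' / (L * (dist x w + dist x y) + dist x y) \<le> dist (f x) (f y)"
    by (rule dist_image_lower_bound[where h = f, OF assms(1,2) _ d'(4) w])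
  then have "dist x y * d' / (L * (dist x w + dist x y) + dist x y) \<le> 0"
    using \<open>f x = f y\<close> by simp
  moreover have "0 < L * (dist x w + dist x y) + dist x y"
    using \<open>x \<noteq> y\<close> assms(2) by (simp add: add_nonneg_pos)
  ultimately show False using \<open>x \<noteq> y\<close> d'(1) by (simp add: divide_le_0_iff mult_le_0_iff)
qed

lemma homeomorphism_if_b_metric_bilipschitz:
  fixes f :: "'a::euclidean_space \<Rightarrow> 'b::euclidean_space"
  assumes "p > 0" "L \<ge> 0" "open G" "G \<noteq> {}" "G \<noteq> UNIV" "open D" "D \<noteq> UNIV" "f ` G = D"
    and le: "\<forall>x\<in>G. \<forall>y\<in>G. b_metric D p (f x) (f y) \<le> L * b_metric G p x y"
    and ge: "\<forall>x\<in>G. \<forall>y\<in>G. b_metric G p x y \<le> L * b_metric D p (f x) (f y)"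
  shows "homeomorphism G D f (inv_into G f)"
proof -
  have inj: "inj_on f G"
    using assms(8) by (intro inj_on_if_b_metric_ge[OF assms(1,2,5-7) _ ge]) auto
  have "D \<noteq> {}" using assms(4,8) by blast
  then have "frontier G \<noteq> {}" "frontier D \<noteq> {}"
    using frontier_not_empty[of G] frontier_not_empty[of D] assms(4,5,7) by auto
  have "continuous_on G f"
    by (rule continuous_on_if_b_metric_le[OF assms(1,2,3,5) \<open>frontier D \<noteq> {}\<close> le])
  moreover have "continuous_on D (inv_into G f)"
  proof (rule continuous_on_if_b_metric_le[OF assms(1,2,6,7) \<open>frontier G \<noteq> {}\<close>], intro ballI)
    fix u v assume "u \<in> D" "v \<in> D"
    then obtain x y where "x \<in> G" "y \<in> G" "u = f x" "v = f y" using assms(8) by blast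
    then show "b_metric G p (inv_into G f u) (inv_into G f v) \<le> L * b_metric D p u v"
      using ge inj by simp
  qed
  ultimately show ?thesis
    using inj assms(8) by (auto simp: homeomorphism_def)
qed

lemma lin_dil_le_of_sphere_bounds:
  fixes f :: "'a::euclidean_space \<Rightarrow> 'b::euclidean_space"
  assumes "r0 > 0"
    and bounds: "\<And>r y. 0 < r \<Longrightarrow> r < r0 \<Longrightarrow> y \<in> sphere x r \<Longrightarrow>
      lo r \<le> dist (f y) (f x) \<and> dist (f y) (f x) \<le> hi r"
    and lo_pos: "\<And>r. 0 < r \<Longrightarrow> r < r0 \<Longrightarrow> lo r > 0"
    and lim: "((\<lambda>r. hi r / lo r) \<longlongrightarrow> c) (at_right 0)"
  shows "lin_dil f x \<le> ereal c"
proof -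
  have "Lmax f x r / lmin f x r \<le> hi r / lo r" if r: "0 < r" "r < r0" for r
  proof (rule frac_le)
    have ne: "sphere x r \<noteq> {}" using r by simp
    then obtain y where "y \<in> sphere x r" by blast
    then show "0 \<le> hi r" using bounds[OF r] lo_pos[OF r] by force
    show "Lmax f x r \<le> hi r"
      unfolding Lmax_def using ne bounds[OF r] by (intro cSUP_least) auto
    show "0 < lo r" by (rule lo_pos[OF r])
    show "lo r \<le> lmin f x r"
      unfolding lmin_def using ne bounds[OF r] by (intro cINF_greatest) auto
  qed
  then have "eventually (\<lambda>r. Lmax f x r / lmin f x r \<le> hi r / lo r) (at_right 0)"
    using \<open>r0 > 0\<close> by (auto simp: eventually_at_right_field)
  then have "lin_dil f x \<le> Limsup (at_right 0) (\<lambda>r. ereal (hi r / lo r))"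
    unfolding lin_dil_def by (intro Limsup_mono) (simp add: eventually_mono)
  also have "\<dots> = ereal c"
    using lim by (intro lim_imp_Limsup) auto
  finally show ?thesis .
qed

lemma lin_dil_le_square_if_b_metric_bilipschitz:
  fixes f :: "'a::euclidean_space \<Rightarrow> 'b::euclidean_space"
  assumes "p > 0" "L > 0" "open G" "G \<noteq> UNIV" "x \<in> G" "open D" "D \<noteq> UNIV" "f x \<in> D"
    and le: "\<forall>y\<in>G. b_metric D p (f x) (f y) \<le> L * b_metric G p x y"
    and ge: "\<forall>y\<in>G. b_metric G p x y \<le> L * b_metric D p (f x) (f y)"
  shows "lin_dil f x \<le> ereal (L\<^sup>2)"
proof -
  obtain d w where d: "d > 0" "w \<in> frontier G" "dist x w = d"
    "\<forall>w\<in>frontier G. d \<le> dist x w" "ball x d \<subseteq> G"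
    by (rule nearest_frontier_point[OF assms(3-5)])
  obtain d' w' where d': "d' > 0" "w' \<in> frontier D" "dist (f x) w' = d'"
    "\<forall>w\<in>frontier D. d' \<le> dist (f x) w" "ball (f x) d' \<subseteq> D"
    by (rule nearest_frontier_point[OF assms(6-8)])
  have L0: "L \<ge> 0" using assms(2) by simp
  have fG: "frontier G \<noteq> {}" and fD: "frontier D \<noteq> {}" using d(2) d'(2) by auto
  define hi where "hi r = L * r * d' / (d - (1 + L) * r)" for r
  define lo where "lo r = r * d' / (L * (d + r) + r)" for r
  have "lo r \<le> dist (f y) (f x) \<and> dist (f y) (f x) \<le> hi r"
    if r: "0 < r" "r < d / (1 + 2 * L)" and y: "y \<in> sphere x r" for r y
  proof -
    have r_eq: "dist x y = r" using y by simp
    have "(1 + L) * r + L * r < d" using r assms(2) by (simp add: field_simps)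
    moreover have "0 \<le> L * r" using r assms(2) by simp
    ultimately have small: "(1 + L) * dist x y < d" and "0 < d - (1 + L) * r"
      using r_eq by (auto simp: algebra_simps)
    then have "y \<in> G" using d(5) r_eq \<open>0 \<le> L * r\<close> by (auto simp: algebra_simps)
    have "dist (f x) (f y) \<le> hi r"
      using dist_image_upper_bound[where h = f, OF assms(1) L0 fG d(4) d'(2) small
          le[rule_format, OF \<open>y \<in> G\<close>]]
      unfolding hi_def r_eq d'(3) .
    also have "hi r < d'"
    proof -
      have "L * r * d' < (d - (1 + L) * r) * d'"
        using d'(1) \<open>(1 + L) * r + L * r < d\<close> by (intro mult_strict_right_mono) auto
      then show ?thesis
        unfolding hi_def using \<open>0 < d - (1 + L) * r\<close>
        by (simp add: pos_divide_less_eq mult.commute)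
    qed
    finally have "lo r \<le> dist (f x) (f y)"
      using dist_image_lower_bound[where h = f, OF assms(1) L0 fD d'(4) d(2) _
          ge[rule_format, OF \<open>y \<in> G\<close>]]
      unfolding lo_def r_eq d(3) by blast
    with \<open>dist (f x) (f y) \<le> hi r\<close> show ?thesis by (simp add: dist_commute)
  qed
  moreover have "lo r > 0" if "r > 0" for r
    unfolding lo_def using that d(1) d'(1) assms(2) by (simp add: add_pos_pos)
  moreover have "((\<lambda>r. hi r / lo r) \<longlongrightarrow> L\<^sup>2) (at_right 0)"
  proof -
    have "((\<lambda>r. L * (L * (d + r) + r) / (d - (1 + L) * r))
        \<longlongrightarrow> L * (L * (d + 0) + 0) / (d - (1 + L) * 0)) (at_right 0)"
      using d(1) by (intro tendsto_intros) auto
    moreover have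
      "eventually (\<lambda>r. L * (L * (d + r) + r) / (d - (1 + L) * r) = hi r / lo r) (at_right 0)"
    proof -
      have "L * (L * (d + r) + r) / (d - (1 + L) * r) = hi r / lo r"
        if "0 < r" "r < d / (1 + L)" for r
      proof -
        have "d - (1 + L) * r \<noteq> 0" using that L0 by (simp add: field_simps)
        moreover have "L * (d + r) + r \<noteq> 0"
          using that d(1) L0 mult_nonneg_nonneg[of L "d + r"] by linarith
        ultimately show ?thesis
          unfolding hi_def lo_def using that(1) d'(1) by (simp add: divide_simps)
      qed
      then show ?thesis
        unfolding eventually_at_right_field using d(1) L0 by (intro exI[of _ "d / (1 + L)"]) auto
    qed
    ultimately show ?thesis
      using d(1) by (auto simp: power2_eq_square intro: Lim_transform_eventually)
  qed
  ultimately show ?thesis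
    using d(1) assms(2) by (intro lin_dil_le_of_sphere_bounds[of "d / (1 + 2 * L)"]) auto
qed

theorem theorem4p9:
  fixes G D :: "'a::euclidean_space set" and f :: "'a \<Rightarrow> 'a" and p L :: real
  assumes "is_domain G" and "G \<noteq> UNIV"
    and "is_domain D" and "D \<noteq> UNIV"
    and "1 \<le> p"
    and "f ` G = D"
    and "1 \<le> L"
    and "\<forall>z1\<in>G. \<forall>z2\<in>G. b_metric G p z1 z2 / L \<le> b_metric D p (f z1) (f z2)
                          \<and> b_metric D p (f z1) (f z2) \<le> L * b_metric G p z1 z2"
  shows "qc_homeomorphism f G D \<and>
         (\<forall>z\<in>G. lin_dil f z \<le> ereal (4 powr (1 - 1 / p) * L\<^sup>2))"
proof -
  have p: "p > 0" and L: "L > 0" using assms(5,7) by auto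
  have G: "open G" "G \<noteq> {}" and D: "open D"
    using assms(1,3) unfolding is_domain_def by auto
  have le: "\<forall>x\<in>G. \<forall>y\<in>G. b_metric D p (f x) (f y) \<le> L * b_metric G p x y"
    and ge: "\<forall>x\<in>G. \<forall>y\<in>G. b_metric G p x y \<le> L * b_metric D p (f x) (f y)"
    using assms(8) L by (auto simp: divide_le_eq mult.commute)
  have "homeomorphism G D f (inv_into G f)"
    using homeomorphism_if_b_metric_bilipschitz[OF p less_imp_le[OF L] G assms(2) D assms(4,6) le ge] .
  moreover have "lin_dil f z \<le> ereal (4 powr (1 - 1 / p) * L\<^sup>2)" if "z \<in> G" for z
  proof -
    have "lin_dil f z \<le> ereal (L\<^sup>2)"
      using that assms(6) le ge
      by (intro lin_dil_le_square_if_b_metric_bilipschitz[OF p L G(1) assms(2) that D assms(4)]) auto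
    also have "L\<^sup>2 \<le> 4 powr (1 - 1 / p) * L\<^sup>2"
      using assms(5) ge_one_powr_ge_zero[of 4 "1 - 1 / p"] by (simp add: mult_le_cancel_right1)
    finally show ?thesis by simp
  qed
  ultimately show ?thesis unfolding qc_homeomorphism_def by blast
qed

end
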